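(* Let $\mathfrak{g}$ be the Lie algebra described in the context with the $G_2$-structure $\varphi=e^{127}+e^{347}+e^{567}+e^{135}-e^{146}-e^{236}-e^{245}$. If $\varphi$ is closed ($d\varphi=0$), is an eigenform ($\Delta\varphi=\lambda\varphi$ for some $\lambda\in\mathbb{R}$, where $\Delta$ is the Hodge Laplacian), and its torsion $2$-form $\tau_2=-\ast d\ast\varphi$ is $\tau_2=a\,e^{12}+b\,e^{34}+c\,e^{56}$ for some $a,b,c\in\mathbb{R}$ with $a+b+c=0$, then $\varphi$ is torsion-free, i.e. $\tau_2=0$.
   Context: $\mathfrak{g}$ is a $7$-dimensional Lie algebra with basis $\{e_1,\dots,e_7\}$, dual basis $\{e^i\}$, $e^{ij\dots}=e^i\wedge e^j\wedge\cdots$, bracket given by $A_1=\operatorname{ad}e_7|_{\operatorname{span}\{e_1,e_2\}}=\begin{pmatrix}x&z\\ y&w\end{pmatrix}$, $A=\operatorname{ad}e_7|_{\mathfrak{g}_1}$, $B=\operatorname{ad}e_1|_{\mathfrak{g}_1}$, $C=\operatorname{ad}e_2|_{\mathfrak{g}_1}$, with $\mathfrak{g}_1=\operatorname{span}\{e_3,\dots,e_6\}$ an abelian ideal, $\operatorname{span}\{e_1,e_2\}$ abelian, $\operatorname{span}\{e_7,e_1,e_2\}$ a subalgebra, $\operatorname{tr}B=\operatorname{tr}C=0$, $[A,B]=xB+yC$, $[A,C]=zB+wC$, $[B,C]=0$. $\varphi$ is viewed as a left-invariant $G_2$-structure on the simply connected Lie group with Lie algebra $\mathfrak{g}$; $\ast$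 and $\Delta=d d^*+d^* d$ are taken with respect to the metric and orientation induced by $\varphi$ (for which $\{e_i\}$ is oriented orthonormal). For closed $\varphi$, $\tau_2$ is the only nonzero torsion form. *)

theory Defs
  imports Complex_Main
begin

text \<open>A (mixed-degree) form is represented by its coefficient function: for an index set
I \<subseteq> {1..7}, alpha I is the coefficient of e^I = e^{i_1} \<and> ... \<and> e^{i_k}
(i_1 < ... < i_k).  Values on sets not contained in {1..7} are irrelevant and are
produced as 0 by all operations below.\<close>

type_synonym form = "nat set \<Rightarrow> real"

text \<open>Structure constants: lie_c ... i j k is the coefficient of e_k in [e_i, e_j].
A1 = ad e_7 on span{e_1,e_2} has columns (x,y), (z,w), i.e. [e_7,e_1] = x e_1 + y e_2,
[e_7,e_2] = z e_1 + w e_2.  A, B, C are the matrices of ad e_7, ad e_1, ad e_2 on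
g_1 = span{e_3,...,e_6}, indexed by {3..6}: M k j = coefficient of e_k in M e_j.\<close>

definition lie_c ::
  "real \<Rightarrow> real \<Rightarrow> real \<Rightarrow> real \<Rightarrow> (nat \<Rightarrow> nat \<Rightarrow> real) \<Rightarrow> (nat \<Rightarrow> nat \<Rightarrow> real) \<Rightarrow>
   (nat \<Rightarrow> nat \<Rightarrow> real) \<Rightarrow> nat \<Rightarrow> nat \<Rightarrow> nat \<Rightarrow> real" where
  "lie_c x y z w A B C i j k =
     (let g1 = {3..6::nat};
          base = (\<lambda>i j k.
             if i = 7 \<and> j = 1 then (if k = 1 then x else if k = 2 then y else 0)
             else if i = 7 \<and> j = 2 then (if k = 1 then z else if k = 2 then w else 0)
             else if i = 7 \<and> j \<in> g1 then (if k \<in> g1 then A k j else 0)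
             else if i = 1 \<and> j \<in> g1 then (if k \<in> g1 then B k j else 0)
             else if i = 2 \<and> j \<in> g1 then (if k \<in> g1 then C k j else 0)
             else 0)
      in base i j k - base j i k)"

text \<open>Evaluation alpha(e_m, e_{j_1}, ..., e_{j_r}) for J = {j_1 < ... < j_r},
with the convention e^{i_1...i_k}(e_{i_1},...,e_{i_k}) = 1.\<close>

definition ev_ins :: "form \<Rightarrow> nat \<Rightarrow> nat set \<Rightarrow> real" where
  "ev_ins \<alpha> m J = (if m \<in> J then 0
                   else (-1::real) ^ card {j \<in> J. j < m} * \<alpha> (insert m J))"

text \<open>Chevalley--Eilenberg differential (exterior derivative of left-invariant forms):
d alpha(X_0,...,X_k) = sum_{p<q} (-1)^{p+q} alpha([X_p,X_q], X_0,..^p..^q..,X_k).\<close>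

definition dform :: "(nat \<Rightarrow> nat \<Rightarrow> nat \<Rightarrow> real) \<Rightarrow> form \<Rightarrow> form" where
  "dform c \<alpha> I =
     (if I \<subseteq> {1..7} then
        (let L = sorted_list_of_set I in
          \<Sum>p<length L. \<Sum>q<length L.
            if p < q then (-1::real) ^ (p + q) *
               (\<Sum>m\<in>{1..7}. c (L ! p) (L ! q) m * ev_ins \<alpha> m (I - {L ! p, L ! q}))
            else 0)
      else 0)"

text \<open>Hodge star for the metric with {e_i} oriented orthonormal, volume form e^{1...7}:
* e^I = s e^{I^c} where e^I \<and> e^{I^c} = s e^{1...7}.\<close>

definition wedge_sign :: "nat set \<Rightarrow> nat set \<Rightarrow> real" where
  "wedge_sign I J = (-1::real) ^ card {(i, j). i \<in> I \<and> j \<in> J \<and> j < i}"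

definition hodge :: "form \<Rightarrow> form" where
  "hodge \<alpha> J = (if J \<subseteq> {1..7} then wedge_sign ({1..7} - J) J * \<alpha> ({1..7} - J) else 0)"

text \<open>Codifferential on a 7-dimensional Riemannian manifold: on k-forms
d^* = (-1)^{7(k+1)+1} * d * = (-1)^k * d *.  The component of d^* alpha of degree
card J comes from the degree (card J + 1) part of alpha.\<close>

definition codiff :: "(nat \<Rightarrow> nat \<Rightarrow> nat \<Rightarrow> real) \<Rightarrow> form \<Rightarrow> form" where
  "codiff c \<alpha> J = (-1::real) ^ (card J + 1) * hodge (dform c (hodge \<alpha>)) J"

definition hodge_laplacian :: "(nat \<Rightarrow> nat \<Rightarrow> nat \<Rightarrow> real) \<Rightarrow> form \<Rightarrow> form" where
  "hodge_laplacian c \<alpha> = (\<lambda>I. dform c (codiff c \<alpha>) I + codiff c (dform c \<alpha>) I)"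

definition tau2 :: "(nat \<Rightarrow> nat \<Rightarrow> nat \<Rightarrow> real) \<Rightarrow> form \<Rightarrow> form" where
  "tau2 c \<phi> = (\<lambda>I. - hodge (dform c (hodge \<phi>)) I)"

definition phi0 :: form where
  "phi0 I = (if I = {1,2,7} \<or> I = {3,4,7} \<or> I = {5,6,7} \<or> I = {1,3,5} then 1
             else if I = {1,4,6} \<or> I = {2,3,6} \<or> I = {2,4,5} then -1 else 0)"

end

theory Submission
  imports Defs
begin

(* Since d phi = 0, the codifferential of phi is tau2, so the Hodge Laplacian of phi is d tau2
   and the eigenform condition reads d tau2 = lam phi.  Pairing with phi gives
   7 lam = |tau2|^2 = a^2 + b^2 + c^2, and the e^347 and e^567 components together with
   tr A = a give a (b c - lam) = 0.  If lam were nonzero, then lam = b c, and a = - b - c turns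
   7 b c = a^2 + b^2 + c^2 into (c - 2 b) (b - 2 c) = 0.  The isometry e1 -> -e1, e2 -> -e2,
   e3 <-> e5, e4 <-> e6 preserves phi and exchanges b and c, so only c = 2 b has to be excluded.
   Then the components of d phi = 0, of tau2 and of d tau2 = lam phi are linear equations in the
   structure constants; solving them and substituting into nine entries of the Jacobi identities
   [A,B] = x B + y C, [A,C] = z B + w C, [B,C] = 0 gives b^2 + (sum of squares) = 0, contradicting
   b <> 0.  Hence lam = 0 and a = b = c = 0. *)

section \<open>The Hodge Laplacian of a closed form\<close>

lemma dform_zero: "dform c (\<lambda>_. 0) = (\<lambda>_. 0)"
proof -
  have ev_ins_zero: "ev_ins (\<lambda>_. 0) m J = 0" for m J
    by (simp add: ev_ins_def)
  show ?thesis
    unfolding dform_def Let_def ev_ins_zero mult_zero_right sum.neutral_const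
    by (simp add: fun_eq_iff)
qed

lemma hodge_zero: "hodge (\<lambda>_. 0) = (\<lambda>_. 0)"
  by (simp add: fun_eq_iff hodge_def)

lemma hodge_laplacian_closed:
  assumes closed: "dform c \<phi> = (\<lambda>_. 0)"
    and two_form: "\<And>J. card J \<noteq> 2 \<Longrightarrow> tau2 c \<phi> J = 0"
  shows "hodge_laplacian c \<phi> = dform c (tau2 c \<phi>)"
proof -
  have codiff_phi: "codiff c \<phi> = tau2 c \<phi>"
  proof
    fix J :: "nat set"
    show "codiff c \<phi> J = tau2 c \<phi> J"
      using two_form[of J] by (cases "card J = 2") (simp_all add: codiff_def tau2_def)
  qed
  have codiff_d_phi: "codiff c (dform c \<phi>) = (\<lambda>_. 0)"
    by (simp add: fun_eq_iff closed codiff_def dform_zero hodge_zero)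
  show ?thesis
    unfolding hodge_laplacian_def codiff_phi codiff_d_phi by simp
qed

section \<open>Evaluating forms on explicit index sets\<close>

lemma atLeastAtMost_1_7: "{1..7::nat} = {1,2,3,4,5,6,7}"
  by auto

lemma card_filter_eq_length:
  "finite J \<Longrightarrow> card {j \<in> J. P j} = length (filter P (sorted_list_of_set J))"
  by (metis distinct_card distinct_filter distinct_sorted_list_of_set set_filter
      set_sorted_list_of_set)

lemma finite_set_eq_iff_sorted:
  "finite I \<Longrightarrow> finite J \<Longrightarrow> I = J \<longleftrightarrow> sorted_list_of_set I = sorted_list_of_set J"
  by (metis sorted_list_of_set.set_sorted_key_list_of_set)

lemma sorted_list_of_set_strict_sorted:
  "sorted_wrt (<) L \<Longrightarrow> sorted_list_of_set (set L) = L"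
  by (simp add: sorted_list_of_set.idem_if_sorted_distinct strict_sorted_iff)

lemma ev_ins_sorted:
  "finite J \<Longrightarrow> ev_ins \<alpha> m J =
     (if m \<in> J then 0 else (-1) ^ length (filter (\<lambda>j. j < m) (sorted_list_of_set J)) * \<alpha> (insert m J))"
  by (simp add: ev_ins_def card_filter_eq_length)

lemma wedge_sign_sorted:
  assumes "finite I" "finite J"
  shows "wedge_sign I J =
    (-1) ^ sum_list (map (\<lambda>i. length (filter (\<lambda>j. j < i) (sorted_list_of_set J))) (sorted_list_of_set I))"
proof -
  have "{(i, j). i \<in> I \<and> j \<in> J \<and> j < i} = Sigma I (\<lambda>i. {j \<in> J. j < i})"
    by auto
  then have "card {(i, j). i \<in> I \<and> j \<in> J \<and> j < i} = (\<Sum>i\<in>I. card {j \<in> J. j < i})"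
    using assms by simp
  then show ?thesis
    using assms by (simp add: wedge_sign_def card_filter_eq_length sum_list_distinct_conv_sum_set)
qed

definition bracket_term ::
  "(nat \<Rightarrow> nat \<Rightarrow> nat \<Rightarrow> real) \<Rightarrow> form \<Rightarrow> nat set \<Rightarrow> nat \<Rightarrow> nat \<Rightarrow> real" where
  "bracket_term c \<alpha> I i j = (\<Sum>m\<in>{1..7}. c i j m * ev_ins \<alpha> m (I - {i, j}))"

lemma bracket_term_expand:
  "bracket_term c \<alpha> I i j = (let e = \<lambda>m. c i j m * ev_ins \<alpha> m (I - {i, j}) in
     e 1 + e 2 + e 3 + e 4 + e 5 + e 6 + e 7)"
  unfolding bracket_term_def atLeastAtMost_1_7 by (simp add: Let_def)

lemma dform_set_sorted_list:
  assumes "sorted_wrt (<) L" "set L \<subseteq> {1..7}"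
  shows "dform c \<alpha> (set L) = (\<Sum>p<length L. \<Sum>q<length L.
           if p < q then (-1) ^ (p + q) * bracket_term c \<alpha> (set L) (L ! p) (L ! q) else 0)"
  using assms unfolding dform_def bracket_term_def by (simp add: sorted_list_of_set_strict_sorted)

lemma dform_3set:
  assumes "1 \<le> i" "i < j" "j < k" "k \<le> 7"
  shows "dform c \<alpha> {i,j,k} = (let d = bracket_term c \<alpha> {i,j,k} in
    - d i j + d i k - d j k)"
  using dform_set_sorted_list[of "[i,j,k]"] assms by (simp add: eval_nat_numeral Let_def)

lemma dform_4set:
  assumes "1 \<le> i" "i < j" "j < k" "k < l" "l \<le> 7"
  shows "dform c \<alpha> {i,j,k,l} = (let d = bracket_term c \<alpha> {i,j,k,l} in
    - d i j + d i k - d i l - d j k + d j l - d k l)"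
  using dform_set_sorted_list[of "[i,j,k,l]"] assms
  by (simp add: eval_nat_numeral Let_def algebra_simps)

lemma dform_5set:
  assumes "1 \<le> i" "i < j" "j < k" "k < l" "l < m" "m \<le> 7"
  shows "dform c \<alpha> {i,j,k,l,m} = (let d = bracket_term c \<alpha> {i,j,k,l,m} in
    - d i j + d i k - d i l + d i m - d j k + d j l - d j m - d k l + d k m - d l m)"
  using dform_set_sorted_list[of "[i,j,k,l,m]"] assms
  by (simp add: eval_nat_numeral Let_def algebra_simps)

lemma phi0_sorted:
  "finite I \<Longrightarrow> phi0 I = (let L = sorted_list_of_set I in
     if L = [1,2,7] \<or> L = [3,4,7] \<or> L = [5,6,7] \<or> L = [1,3,5] then 1
     else if L = [1,4,6] \<or> L = [2,3,6] \<or> L = [2,4,5] then -1 else 0)"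
  unfolding phi0_def Let_def
  by (simp only: finite_set_eq_iff_sorted[of I] finite.intros finite_insert) simp

definition psi0 :: form where
  "psi0 I = (if I = {3,4,5,6} \<or> I = {1,2,5,6} \<or> I = {1,2,3,4} \<or> I = {2,3,5,7}
                \<or> I = {1,4,5,7} \<or> I = {1,3,6,7} then 1
             else if I = {2,4,6,7} then -1 else 0)"

lemma psi0_sorted:
  "finite I \<Longrightarrow> psi0 I = (let L = sorted_list_of_set I in
     if L = [3,4,5,6] \<or> L = [1,2,5,6] \<or> L = [1,2,3,4] \<or> L = [2,3,5,7]
        \<or> L = [1,4,5,7] \<or> L = [1,3,6,7] then 1
     else if L = [2,4,6,7] then -1 else 0)"
  unfolding psi0_def Let_def
  by (simp only: finite_set_eq_iff_sorted[of I] finite.intros finite_insert) simp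

lemma hodge_complement:
  "K \<subseteq> {1..7} \<Longrightarrow>
    hodge \<alpha> ({1..7} - K) = wedge_sign K ({1..7} - K) * \<alpha> K"
  by (simp add: hodge_def double_diff)

lemma hodge_phi0_complement:
  assumes K: "K \<subseteq> {1..7}"
  shows "hodge phi0 ({1..7} - K) = psi0 ({1..7} - K)"
proof (cases "K \<in> {{1,2,7}, {3,4,7}, {5,6,7}, {1,3,5}, {1,4,6}, {2,3,6}, {2,4,5}}")
  case True
  then show ?thesis
    unfolding hodge_complement[OF K] unfolding atLeastAtMost_1_7
    by (elim insertE emptyE)
      (simp_all add: phi0_sorted psi0_sorted insert_Diff_if wedge_sign_sorted)
next
  case False
  then have "phi0 K = 0"
    by (simp add: phi0_def)
  moreover have "psi0 ({1..7} - K) = 0"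
  proof -
    let ?P = "{{3,4,5,6}, {1,2,5,6}, {1,2,3,4}, {2,3,5,7}, {1,4,5,7}, {1,3,6,7}, {2,4,6,7}} :: nat set set"
    have complement: "K \<in> {{1,2,7}, {3,4,7}, {5,6,7}, {1,3,5}, {1,4,6}, {2,3,6}, {2,4,5}}"
      if "J \<in> ?P" "K = {1..7} - J" for J
      using that unfolding atLeastAtMost_1_7 by (elim insertE emptyE) (simp_all add: insert_Diff_if)
    have "K = {1..7} - ({1..7} - K)"
      using K by auto
    then have "{1..7} - K \<notin> ?P"
      using complement False by metis
    then show ?thesis
      by (simp add: psi0_def)
  qed
  ultimately show ?thesis
    unfolding hodge_complement[OF K] by simp
qed

lemma hodge_phi0: "hodge phi0 = psi0"
proof
  fix J :: "nat set"
  show "hodge phi0 J = psi0 J"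
  proof (cases "J \<subseteq> {1..7}")
    case True
    have "hodge phi0 ({1..7} - ({1..7} - J)) = psi0 ({1..7} - ({1..7} - J))"
      by (rule hodge_phi0_complement) auto
    with True show ?thesis
      by (simp add: Diff_Diff_Int Int_absorb1)
  next
    case False
    moreover have "J \<subseteq> {1..7}" if "psi0 J \<noteq> 0"
      using that unfolding psi0_def by (auto split: if_splits)
    ultimately show ?thesis
      by (auto simp: hodge_def)
  qed
qed

definition tau_abc :: "real \<Rightarrow> real \<Rightarrow> real \<Rightarrow> form" where
  "tau_abc a b c I = (if I = {1,2} then a else if I = {3,4} then b else if I = {5,6} then c else 0)"

lemma tau_abc_sorted:
  "finite I \<Longrightarrow> tau_abc a b c I = (let L = sorted_list_of_set I in
     if L = [1,2] then a else if L = [3,4] then b else if L = [5,6] then c else 0)"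
  unfolding tau_abc_def Let_def
  by (simp only: finite_set_eq_iff_sorted[of I] finite.intros finite_insert) simp

lemma tau_abc_two_form:
  assumes "card J \<noteq> 2"
  shows "tau_abc a b c J = 0"
proof -
  have "J \<noteq> {1,2}" "J \<noteq> {3,4}" "J \<noteq> {5,6}"
    using assms by auto
  then show ?thesis
    by (simp add: tau_abc_def)
qed

lemma tau_abc_values:
  "tau_abc a b c {1,2} = a" "tau_abc a b c {3,4} = b" "tau_abc a b c {5,6} = c"
  "tau_abc a b c {3,5} = 0" "tau_abc a b c {3,6} = 0" "tau_abc a b c {4,5} = 0"
  by (simp_all add: tau_abc_sorted)

lemma phi0_values:
  "phi0 {1,2,7} = 1" "phi0 {1,3,4} = 0" "phi0 {1,3,5} = 1" "phi0 {1,3,6} = 0" "phi0 {1,4,5} = 0"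
  "phi0 {1,4,6} = -1" "phi0 {1,5,6} = 0" "phi0 {2,3,4} = 0" "phi0 {2,3,5} = 0" "phi0 {2,3,6} = -1"
  "phi0 {2,4,5} = -1" "phi0 {2,4,6} = 0" "phi0 {2,5,6} = 0" "phi0 {3,4,7} = 1" "phi0 {3,5,7} = 0"
  "phi0 {3,6,7} = 0" "phi0 {4,5,7} = 0" "phi0 {4,6,7} = 0" "phi0 {5,6,7} = 1"
  by (simp_all add: phi0_sorted)

section \<open>Components for the Lie algebra\<close>

lemma dform_phi0_components:
  fixes x y z w :: real and A B C :: "nat \<Rightarrow> nat \<Rightarrow> real"
  defines "br \<equiv> lie_c x y z w A B C"
  shows "dform br phi0 {1,2,3,4} = - B 5 3 + B 6 4 + C 5 4 + C 6 3"
    and "dform br phi0 {1,2,3,5} = B 4 3 + B 6 5 + C 3 3 + C 5 5"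
    and "dform br phi0 {1,2,3,6} = B 3 3 + B 6 6 - C 4 3 + C 5 6"
    and "dform br phi0 {1,2,4,5} = B 4 4 + B 5 5 + C 3 4 - C 6 5"
    and "dform br phi0 {1,2,4,6} = B 3 4 + B 5 6 - C 4 4 - C 6 6"
    and "dform br phi0 {1,2,5,6} = B 3 5 - B 4 6 - C 3 6 - C 4 5"
    and "dform br phi0 {1,3,4,7} = A 5 4 + A 6 3 - B 3 3 - B 4 4"
    and "dform br phi0 {1,3,5,7} = A 3 3 + A 5 5 - B 4 5 + B 6 3 + x"
    and "dform br phi0 {1,3,6,7} = - A 4 3 + A 5 6 - B 4 6 - B 5 3 - y"
    and "dform br phi0 {1,4,5,7} = A 3 4 - A 6 5 + B 3 5 + B 6 4 - y"
    and "dform br phi0 {1,4,6,7} = - A 4 4 - A 6 6 + B 3 6 - B 5 4 - x"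
    and "dform br phi0 {1,5,6,7} = - A 3 6 - A 4 5 - B 5 5 - B 6 6"
    and "dform br phi0 {2,3,4,7} = A 5 3 - A 6 4 - C 3 3 - C 4 4"
    and "dform br phi0 {2,3,5,7} = - A 4 3 - A 6 5 - C 4 5 + C 6 3 + z"
    and "dform br phi0 {2,3,6,7} = - A 3 3 - A 6 6 - C 4 6 - C 5 3 - w"
    and "dform br phi0 {2,4,5,7} = - A 4 4 - A 5 5 + C 3 5 + C 6 4 - w"
    and "dform br phi0 {2,4,6,7} = - A 3 4 - A 5 6 + C 3 6 - C 5 4 - z"
    and "dform br phi0 {2,5,6,7} = - A 3 5 + A 4 6 - C 5 5 - C 6 6"
  unfolding br_def
  by (simp_all add: dform_4set Let_def bracket_term_expand ev_ins_sorted phi0_sorted insert_Diff_if,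
      simp_all add: lie_c_def algebra_simps)

lemma tau2_phi0_components:
  fixes x y z w :: real and A B C :: "nat \<Rightarrow> nat \<Rightarrow> real"
  defines "br \<equiv> lie_c x y z w A B C"
  shows "tau2 br phi0 {1,2} = A 3 3 + A 4 4 + A 5 5 + A 6 6"
    and "tau2 br phi0 {3,4} = A 5 5 + A 6 6 - B 3 6 - B 4 5 - C 3 5 + C 4 6 + w + x"
    and "tau2 br phi0 {3,5} = A 3 6 - A 5 4 + B 4 4 + B 6 6 + C 3 4 + C 5 6"
    and "tau2 br phi0 {3,6} = - A 3 5 - A 6 4 + B 3 4 - B 6 5 - C 4 4 - C 5 5"
    and "tau2 br phi0 {4,5} = A 4 6 + A 5 3 - B 4 3 + B 5 6 - C 3 3 - C 6 6"
    and "tau2 br phi0 {5,6} = A 3 3 + A 4 4 + B 5 4 + B 6 3 + C 5 3 - C 6 4 + w + x"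
  unfolding br_def tau2_def hodge_phi0 hodge_def atLeastAtMost_1_7
  by (simp_all add: insert_Diff_if wedge_sign_sorted dform_5set Let_def bracket_term_expand
      ev_ins_sorted psi0_sorted, simp_all add: lie_c_def algebra_simps)

lemma dform_tau_abc_components:
  fixes x y z w :: real and A B C :: "nat \<Rightarrow> nat \<Rightarrow> real" and a b c :: real
  defines "br \<equiv> lie_c x y z w A B C"
  shows "dform br (tau_abc a b c) {1,2,7} = - a * w - a * x"
    and "dform br (tau_abc a b c) {1,3,4} = - B 3 3 * b - B 4 4 * b"
    and "dform br (tau_abc a b c) {1,3,5} = - B 4 5 * b + B 6 3 * c"
    and "dform br (tau_abc a b c) {1,3,6} = - B 4 6 * b - B 5 3 * c"
    and "dform br (tau_abc a b c) {1,4,5} = B 3 5 * b + B 6 4 * c"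
    and "dform br (tau_abc a b c) {1,4,6} = B 3 6 * b - B 5 4 * c"
    and "dform br (tau_abc a b c) {1,5,6} = - B 5 5 * c - B 6 6 * c"
    and "dform br (tau_abc a b c) {2,3,4} = - C 3 3 * b - C 4 4 * b"
    and "dform br (tau_abc a b c) {2,3,5} = - C 4 5 * b + C 6 3 * c"
    and "dform br (tau_abc a b c) {2,3,6} = - C 4 6 * b - C 5 3 * c"
    and "dform br (tau_abc a b c) {2,4,5} = C 3 5 * b + C 6 4 * c"
    and "dform br (tau_abc a b c) {2,4,6} = C 3 6 * b - C 5 4 * c"
    and "dform br (tau_abc a b c) {2,5,6} = - C 5 5 * c - C 6 6 * c"
    and "dform br (tau_abc a b c) {3,4,7} = - A 3 3 * b - A 4 4 * b"
    and "dform br (tau_abc a b c) {3,5,7} = - A 4 5 * b + A 6 3 * c"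
    and "dform br (tau_abc a b c) {3,6,7} = - A 4 6 * b - A 5 3 * c"
    and "dform br (tau_abc a b c) {4,5,7} = A 3 5 * b + A 6 4 * c"
    and "dform br (tau_abc a b c) {4,6,7} = A 3 6 * b - A 5 4 * c"
    and "dform br (tau_abc a b c) {5,6,7} = - A 5 5 * c - A 6 6 * c"
  unfolding br_def
  by (simp_all add: dform_3set bracket_term_expand ev_ins_sorted tau_abc_sorted insert_Diff_if,
      simp_all add: lie_c_def algebra_simps)

section \<open>The algebraic core\<close>

lemma atLeastAtMost_3_6: "{3..6::nat} = {3,4,5,6}"
  by auto

definition swap_pairs :: "nat \<Rightarrow> nat" where
  "swap_pairs i =
    (if i = 3 then 5 else if i = 5 then 3 else if i = 4 then 6 else if i = 6 then 4 else i)"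

lemma swap_pairs_simps:
  "swap_pairs 3 = 5" "swap_pairs 4 = 6" "swap_pairs 5 = 3" "swap_pairs 6 = 4"
  by (simp_all add: swap_pairs_def)

lemma sum_3_6: "(\<Sum>k\<in>{3..6::nat}. f k) = f 3 + f 4 + f 5 + (f 6 :: real)"
  by (simp add: numeral_eq_Suc atLeastAtMostSuc_conv)

(* The scalar content of the hypotheses: dphi_I, tau_I and dtau_I are the e^I-components of
   d phi = 0, of tau2 = a e^12 + b e^34 + c e^56 and of d tau2 = lam phi (those used below). *)
locale closed_eigenform_relations =
  fixes x y z w a b c lam :: real and A B C :: "nat \<Rightarrow> nat \<Rightarrow> real"
  assumes trB: "(\<Sum>i\<in>{3..6::nat}. B i i) = 0"
    and trC: "(\<Sum>i\<in>{3..6::nat}. C i i) = 0"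
    and AB: "\<forall>i\<in>{3..6::nat}. \<forall>j\<in>{3..6}.
               (\<Sum>k\<in>{3..6}. A i k * B k j - B i k * A k j) = x * B i j + y * C i j"
    and AC: "\<forall>i\<in>{3..6::nat}. \<forall>j\<in>{3..6}.
               (\<Sum>k\<in>{3..6}. A i k * C k j - C i k * A k j) = z * B i j + w * C i j"
    and BC: "\<forall>i\<in>{3..6::nat}. \<forall>j\<in>{3..6}.
               (\<Sum>k\<in>{3..6}. B i k * C k j - C i k * B k j) = 0"
    and dphi_1234: "- B 5 3 + B 6 4 + C 5 4 + C 6 3 = 0"
    and dphi_1235: "B 4 3 + B 6 5 + C 3 3 + C 5 5 = 0"
    and dphi_1236: "B 3 3 + B 6 6 - C 4 3 + C 5 6 = 0"
    and dphi_1245: "B 4 4 + B 5 5 + C 3 4 - C 6 5 = 0"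
    and dphi_1246: "B 3 4 + B 5 6 - C 4 4 - C 6 6 = 0"
    and dphi_1256: "B 3 5 - B 4 6 - C 3 6 - C 4 5 = 0"
    and dphi_1347: "A 5 4 + A 6 3 - B 3 3 - B 4 4 = 0"
    and dphi_1357: "A 3 3 + A 5 5 - B 4 5 + B 6 3 + x = 0"
    and dphi_1367: "- A 4 3 + A 5 6 - B 4 6 - B 5 3 - y = 0"
    and dphi_1457: "A 3 4 - A 6 5 + B 3 5 + B 6 4 - y = 0"
    and dphi_1467: "- A 4 4 - A 6 6 + B 3 6 - B 5 4 - x = 0"
    and dphi_1567: "- A 3 6 - A 4 5 - B 5 5 - B 6 6 = 0"
    and dphi_2347: "A 5 3 - A 6 4 - C 3 3 - C 4 4 = 0"
    and dphi_2357: "- A 4 3 - A 6 5 - C 4 5 + C 6 3 + z = 0"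
    and dphi_2367: "- A 3 3 - A 6 6 - C 4 6 - C 5 3 - w = 0"
    and dphi_2457: "- A 4 4 - A 5 5 + C 3 5 + C 6 4 - w = 0"
    and dphi_2467: "- A 3 4 - A 5 6 + C 3 6 - C 5 4 - z = 0"
    and dphi_2567: "- A 3 5 + A 4 6 - C 5 5 - C 6 6 = 0"
    and tau_12: "A 3 3 + A 4 4 + A 5 5 + A 6 6 = a"
    and tau_34: "A 5 5 + A 6 6 - B 3 6 - B 4 5 - C 3 5 + C 4 6 + w + x = b"
    and tau_35: "A 3 6 - A 5 4 + B 4 4 + B 6 6 + C 3 4 + C 5 6 = 0"
    and tau_36: "- A 3 5 - A 6 4 + B 3 4 - B 6 5 - C 4 4 - C 5 5 = 0"
    and tau_45: "A 4 6 + A 5 3 - B 4 3 + B 5 6 - C 3 3 - C 6 6 = 0"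
    and tau_56: "A 3 3 + A 4 4 + B 5 4 + B 6 3 + C 5 3 - C 6 4 + w + x = c"
    and dtau_127: "- a * w - a * x = lam"
    and dtau_134: "- B 3 3 * b - B 4 4 * b = 0"
    and dtau_135: "- B 4 5 * b + B 6 3 * c = lam"
    and dtau_136: "- B 4 6 * b - B 5 3 * c = 0"
    and dtau_145: "B 3 5 * b + B 6 4 * c = 0"
    and dtau_146: "B 3 6 * b - B 5 4 * c = - lam"
    and dtau_156: "- B 5 5 * c - B 6 6 * c = 0"
    and dtau_234: "- C 3 3 * b - C 4 4 * b = 0"
    and dtau_235: "- C 4 5 * b + C 6 3 * c = 0"
    and dtau_236: "- C 4 6 * b - C 5 3 * c = - lam"
    and dtau_245: "C 3 5 * b + C 6 4 * c = - lam"
    and dtau_246: "C 3 6 * b - C 5 4 * c = 0"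
    and dtau_256: "- C 5 5 * c - C 6 6 * c = 0"
    and dtau_347: "- A 3 3 * b - A 4 4 * b = lam"
    and dtau_357: "- A 4 5 * b + A 6 3 * c = 0"
    and dtau_367: "- A 4 6 * b - A 5 3 * c = 0"
    and dtau_457: "A 3 5 * b + A 6 4 * c = 0"
    and dtau_467: "A 3 6 * b - A 5 4 * c = 0"
    and dtau_567: "- A 5 5 * c - A 6 6 * c = lam"
    and abc: "a + b + c = 0"
begin

lemma trace_B: "B 3 3 + B 4 4 + B 5 5 + B 6 6 = 0"
  using trB by (simp add: sum_3_6)

lemma trace_C: "C 3 3 + C 4 4 + C 5 5 + C 6 6 = 0"
  using trC by (simp add: sum_3_6)

lemma seven_lam_eq_sum_squares: "7 * lam = a^2 + b^2 + c^2"
proof -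
  have b_part: "A 3 3 + A 4 4 + B 4 5 + B 3 6 - C 4 6 + C 3 5 = a - b + w + x"
    using tau_12 tau_34 by linarith
  have c_part: "A 5 5 + A 6 6 - B 6 3 - B 5 4 - C 5 3 + C 6 4 = a - c + w + x"
    using tau_12 tau_56 by linarith
  (* <d tau2, phi> = 7 lam, read off from the seven components where phi is nonzero *)
  have "7 * lam = - a * w - a * x + (- A 3 3 * b - A 4 4 * b) + (- A 5 5 * c - A 6 6 * c)
      + (- B 4 5 * b + B 6 3 * c) - (B 3 6 * b - B 5 4 * c) - (- C 4 6 * b - C 5 3 * c)
      - (C 3 5 * b + C 6 4 * c)"
    using dtau_127 dtau_347 dtau_567 dtau_135 dtau_146 dtau_236 dtau_245 by linarith
  also have "\<dots> = - a * (w + x) - b * (A 3 3 + A 4 4 + B 4 5 + B 3 6 - C 4 6 + C 3 5)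
      - c * (A 5 5 + A 6 6 - B 6 3 - B 5 4 - C 5 3 + C 6 4)"
    by (simp add: algebra_simps)
  also have "\<dots> = - a * (w + x) - b * (a - b + w + x) - c * (a - c + w + x)"
    by (simp only: b_part c_part)
  also have "\<dots> = a^2 + b^2 + c^2"
    using abc by algebra
  finally show ?thesis .
qed

lemma a_bc_eq_a_lam: "a * (b * c) = a * lam"
proof -
  have b_part: "(A 3 3 + A 4 4) * b = - lam"
    using dtau_347 by (simp add: distrib_right)
  have c_part: "(A 5 5 + A 6 6) * c = - lam"
    using dtau_567 by (simp add: distrib_right)
  have "a * (b * c) = c * ((A 3 3 + A 4 4) * b) + b * ((A 5 5 + A 6 6) * c)"
    unfolding tau_12[symmetric] by (simp add: algebra_simps)
  also have "\<dots> = - (b + c) * lam"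
    unfolding b_part c_part by (simp add: algebra_simps)
  also have "\<dots> = a * lam"
  proof -
    have "b + c = - a"
      using abc by linarith
    then show ?thesis
      by simp
  qed
  finally show ?thesis .
qed

context
  assumes c_eq: "c = 2 * b" and b_nz: "b \<noteq> 0" and lam_eq: "lam = b * c"
begin

lemma a_eq: "a = - 3 * b"
  using abc c_eq by linarith

lemma lam_2b: "lam = 2 * b^2"
  using lam_eq c_eq by (simp add: power2_eq_square)

lemma dtau_relations_div_b:
  shows dtau_127_div: "- 2 * b + 3 * w + 3 * x = 0"
    and dtau_134_div: "- B 3 3 - B 4 4 = 0"
    and dtau_135_div: "- B 4 5 + 2 * B 6 3 - 2 * b = 0"
    and dtau_136_div: "- B 4 6 - 2 * B 5 3 = 0"
    and dtau_145_div: "B 3 5 + 2 * B 6 4 = 0"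
    and dtau_146_div: "B 3 6 - 2 * B 5 4 + 2 * b = 0"
    and dtau_156_div: "- 2 * B 5 5 - 2 * B 6 6 = 0"
    and dtau_234_div: "- C 3 3 - C 4 4 = 0"
    and dtau_235_div: "- C 4 5 + 2 * C 6 3 = 0"
    and dtau_236_div: "- C 4 6 - 2 * C 5 3 + 2 * b = 0"
    and dtau_245_div: "C 3 5 + 2 * C 6 4 + 2 * b = 0"
    and dtau_246_div: "C 3 6 - 2 * C 5 4 = 0"
    and dtau_256_div: "- 2 * C 5 5 - 2 * C 6 6 = 0"
    and dtau_347_div: "- A 3 3 - A 4 4 - 2 * b = 0"
    and dtau_357_div: "- A 4 5 + 2 * A 6 3 = 0"
    and dtau_367_div: "- A 4 6 - 2 * A 5 3 = 0"
    and dtau_457_div: "A 3 5 + 2 * A 6 4 = 0"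
    and dtau_467_div: "A 3 6 - 2 * A 5 4 = 0"
    and dtau_567_div: "- 2 * A 5 5 - 2 * A 6 6 - 2 * b = 0"
proof -
  have cancel: "L = 0" if "b * L = 0" for L
    using that b_nz by simp
  show "- 2 * b + 3 * w + 3 * x = 0"
    by (rule cancel) (use dtau_127[unfolded a_eq c_eq lam_2b] in algebra)
  show "- B 3 3 - B 4 4 = 0"
    by (rule cancel) (use dtau_134[unfolded a_eq c_eq lam_2b] in algebra)
  show "- B 4 5 + 2 * B 6 3 - 2 * b = 0"
    by (rule cancel) (use dtau_135[unfolded a_eq c_eq lam_2b] in algebra)
  show "- B 4 6 - 2 * B 5 3 = 0"
    by (rule cancel) (use dtau_136[unfolded a_eq c_eq lam_2b] in algebra)
  show "B 3 5 + 2 * B 6 4 = 0"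
    by (rule cancel) (use dtau_145[unfolded a_eq c_eq lam_2b] in algebra)
  show "B 3 6 - 2 * B 5 4 + 2 * b = 0"
    by (rule cancel) (use dtau_146[unfolded a_eq c_eq lam_2b] in algebra)
  show "- 2 * B 5 5 - 2 * B 6 6 = 0"
    by (rule cancel) (use dtau_156[unfolded a_eq c_eq lam_2b] in algebra)
  show "- C 3 3 - C 4 4 = 0"
    by (rule cancel) (use dtau_234[unfolded a_eq c_eq lam_2b] in algebra)
  show "- C 4 5 + 2 * C 6 3 = 0"
    by (rule cancel) (use dtau_235[unfolded a_eq c_eq lam_2b] in algebra)
  show "- C 4 6 - 2 * C 5 3 + 2 * b = 0"
    by (rule cancel) (use dtau_236[unfolded a_eq c_eq lam_2b] in algebra)
  show "C 3 5 + 2 * C 6 4 + 2 * b = 0"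
    by (rule cancel) (use dtau_245[unfolded a_eq c_eq lam_2b] in algebra)
  show "C 3 6 - 2 * C 5 4 = 0"
    by (rule cancel) (use dtau_246[unfolded a_eq c_eq lam_2b] in algebra)
  show "- 2 * C 5 5 - 2 * C 6 6 = 0"
    by (rule cancel) (use dtau_256[unfolded a_eq c_eq lam_2b] in algebra)
  show "- A 3 3 - A 4 4 - 2 * b = 0"
    by (rule cancel) (use dtau_347[unfolded a_eq c_eq lam_2b] in algebra)
  show "- A 4 5 + 2 * A 6 3 = 0"
    by (rule cancel) (use dtau_357[unfolded a_eq c_eq lam_2b] in algebra)
  show "- A 4 6 - 2 * A 5 3 = 0"
    by (rule cancel) (use dtau_367[unfolded a_eq c_eq lam_2b] in algebra)
  show "A 3 5 + 2 * A 6 4 = 0"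
    by (rule cancel) (use dtau_457[unfolded a_eq c_eq lam_2b] in algebra)
  show "A 3 6 - 2 * A 5 4 = 0"
    by (rule cancel) (use dtau_467[unfolded a_eq c_eq lam_2b] in algebra)
  show "- 2 * A 5 5 - 2 * A 6 6 - 2 * b = 0"
    by (rule cancel) (use dtau_567[unfolded a_eq c_eq lam_2b] in algebra)
qed

lemma linear_solution:
  shows sol_B53: "B 5 3 = - A 5 6 - A 6 5 + (1/2) * C 3 6"
    and sol_B43: "B 4 3 = - A 6 4 + B 5 6 + C 4 4 - C 6 6"
    and sol_B33: "B 3 3 = (1/2) * A 5 4 + C 3 4 + (1/2) * C 5 6 - (1/2) * C 6 5"
    and sol_B44: "B 4 4 = - (1/2) * A 5 4 - C 3 4 - (1/2) * C 5 6 + (1/2) * C 6 5"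
    and sol_B34: "B 3 4 = - B 5 6 + C 4 4 + C 6 6"
    and sol_B35: "B 3 5 = - 2 * A 3 4 - 2 * A 4 3 + C 3 6"
    and sol_A63: "A 6 3 = - A 5 4"
    and sol_B63: "B 6 3 = - A 4 4 - A 6 6 - (1/3) * b - w"
    and sol_B46: "B 4 6 = 2 * A 5 6 + 2 * A 6 5 - C 3 6"
    and sol_y: "y = - A 4 3 - A 6 5 + (1/2) * C 3 6"
    and sol_B54: "B 5 4 = A 4 4 + A 6 6 + (8/3) * b - w"
    and sol_B55: "B 5 5 = (1/2) * A 5 4 + (1/2) * C 5 6 + (1/2) * C 6 5"
    and sol_C33: "C 3 3 = - C 4 4"
    and sol_C63: "C 6 3 = - A 3 4 - A 4 3 - A 5 6 - A 6 5 + (1/2) * C 3 6"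
    and sol_C53: "C 5 3 = - A 4 4 + A 6 6 + w"
    and sol_C64: "C 6 4 = - A 4 4 + A 6 6 - b - w"
    and sol_C54: "C 5 4 = (1/2) * C 3 6"
    and sol_C55: "C 5 5 = - C 6 6"
    and sol_A33: "A 3 3 = - A 4 4 - 2 * b"
    and sol_A53: "A 5 3 = A 6 4"
    and sol_C43: "C 4 3 = C 3 4 + C 5 6 - C 6 5"
    and sol_B45: "B 4 5 = - 2 * A 4 4 - 2 * A 6 6 - (8/3) * b - 2 * w"
    and sol_B66: "B 6 6 = - (1/2) * A 5 4 - (1/2) * C 5 6 - (1/2) * C 6 5"
    and sol_B65: "B 6 5 = A 6 4 - B 5 6 + 2 * C 6 6"
    and sol_x: "x = (2/3) * b - w"
    and sol_A36: "A 3 6 = 2 * A 5 4"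
    and sol_B36: "B 3 6 = 2 * A 4 4 + 2 * A 6 6 + (10/3) * b - 2 * w"
    and sol_B64: "B 6 4 = A 3 4 + A 4 3 - (1/2) * C 3 6"
    and sol_C45: "C 4 5 = - 2 * A 3 4 - 2 * A 4 3 - 2 * A 5 6 - 2 * A 6 5 + C 3 6"
    and sol_C35: "C 3 5 = 2 * A 4 4 - 2 * A 6 6 + 2 * w"
    and sol_A35: "A 3 5 = - 2 * A 6 4"
    and sol_z: "z = - A 3 4 - A 5 6 + (1/2) * C 3 6"
    and sol_C46: "C 4 6 = 2 * A 4 4 - 2 * A 6 6 + 2 * b - 2 * w"
    and sol_A55: "A 5 5 = - A 6 6 - b"
    and sol_A45: "A 4 5 = - 2 * A 5 4"
    and sol_A46: "A 4 6 = - 2 * A 6 4"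
proof -
  show "B 5 3 = - A 5 6 - A 6 5 + (1/2) * C 3 6"
    using dphi_1234 dphi_2357 dphi_2467 dtau_136_div dphi_1367 dphi_1457 dtau_235_div dtau_145_div
      a_eq c_eq by linarith
  show "B 4 3 = - A 6 4 + B 5 6 + C 4 4 - C 6 6"
    using dphi_1235 trace_C tau_36 dphi_1246 dphi_2567 dtau_367_div dphi_2347 dtau_234_div a_eq
      c_eq by linarith
  show "B 3 3 = (1/2) * A 5 4 + C 3 4 + (1/2) * C 5 6 - (1/2) * C 6 5"
    using dphi_1245 tau_35 dphi_1567 dtau_357_div dphi_1347 a_eq c_eq by linarith
  show "B 4 4 = - (1/2) * A 5 4 - C 3 4 - (1/2) * C 5 6 + (1/2) * C 6 5"
    using dphi_1245 dphi_1567 tau_35 dtau_357_div dphi_1347 dtau_134_div a_eq c_eq by linarith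
  show "B 3 4 = - B 5 6 + C 4 4 + C 6 6"
    using dphi_1246 a_eq c_eq by linarith
  show "B 3 5 = - 2 * A 3 4 - 2 * A 4 3 + C 3 6"
    using dphi_1367 dphi_1234 dphi_1457 dphi_2357 dphi_2467 dtau_235_div dtau_136_div a_eq c_eq
      by linarith
  show "A 6 3 = - A 5 4"
    using dphi_1347 dtau_134_div a_eq c_eq by linarith
  show "B 6 3 = - A 4 4 - A 6 6 - (1/3) * b - w"
    using dphi_1357 tau_12 dtau_135_div dtau_127_div a_eq c_eq by linarith
  show "B 4 6 = 2 * A 5 6 + 2 * A 6 5 - C 3 6"
    using dphi_1367 dphi_1234 dphi_1457 dphi_2357 dphi_2467 dtau_235_div dtau_145_div a_eq c_eq
      by linarith
  show "y = - A 4 3 - A 6 5 + (1/2) * C 3 6"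
    using dphi_1457 dphi_1367 dphi_1234 dphi_2357 dphi_2467 dtau_235_div dtau_145_div dtau_136_div
      a_eq c_eq by linarith
  show "B 5 4 = A 4 4 + A 6 6 + (8/3) * b - w"
    using dphi_1467 dtau_127_div dtau_146_div a_eq c_eq by linarith
  show "B 5 5 = (1/2) * A 5 4 + (1/2) * C 5 6 + (1/2) * C 6 5"
    using dphi_1567 tau_35 dphi_1245 dtau_357_div dphi_1347 dtau_134_div a_eq c_eq by linarith
  show "C 3 3 = - C 4 4"
    using dtau_234_div a_eq c_eq by linarith
  show "C 6 3 = - A 3 4 - A 4 3 - A 5 6 - A 6 5 + (1/2) * C 3 6"
    using dphi_2357 dtau_145_div dtau_136_div dphi_1234 dphi_2467 dphi_1256 dtau_235_div a_eq c_eq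
      by linarith
  show "C 5 3 = - A 4 4 + A 6 6 + w"
    using dphi_2367 tau_12 dtau_245_div dphi_2457 dtau_146_div dphi_1467 dtau_127_div dtau_135_div
      dphi_1357 tau_34 a_eq c_eq by linarith
  show "C 6 4 = - A 4 4 + A 6 6 - b - w"
    using dphi_2457 dtau_146_div dphi_1467 dtau_127_div dtau_135_div dphi_1357 tau_12 tau_34
      dtau_236_div dphi_2367 dtau_245_div a_eq c_eq by linarith
  show "C 5 4 = (1/2) * C 3 6"
    using dtau_235_div dtau_145_div dtau_136_div dphi_1234 dphi_1256 a_eq c_eq by linarith
  show "C 5 5 = - C 6 6"
    using dtau_234_div trace_C a_eq c_eq by linarith
  show "A 3 3 = - A 4 4 - 2 * b"
    using tau_12 dtau_245_div dphi_2457 dtau_146_div dphi_1467 dtau_127_div dtau_135_div dphi_1357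
      tau_34 dtau_236_div dphi_2367 a_eq c_eq by linarith
  show "A 5 3 = A 6 4"
    using dphi_2347 dtau_234_div a_eq c_eq by linarith
  show "C 4 3 = C 3 4 + C 5 6 - C 6 5"
    using trace_B dphi_1236 dphi_1245 a_eq c_eq by linarith
  show "B 4 5 = - 2 * A 4 4 - 2 * A 6 6 - (8/3) * b - 2 * w"
    using dtau_127_div dtau_135_div dphi_1357 tau_12 a_eq c_eq by linarith
  show "B 6 6 = - (1/2) * A 5 4 - (1/2) * C 5 6 - (1/2) * C 6 5"
    using tau_35 dphi_1245 dphi_1567 trace_B dtau_357_div dphi_1347 a_eq c_eq by linarith
  show "B 6 5 = A 6 4 - B 5 6 + 2 * C 6 6"
    using tau_36 dphi_1246 dphi_2567 dtau_367_div dphi_2347 dtau_234_div a_eq c_eq by linarith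
  show "x = (2/3) * b - w"
    using dtau_127_div a_eq c_eq by linarith
  show "A 3 6 = 2 * A 5 4"
    using dtau_134_div trace_B dphi_1567 dtau_357_div dphi_1347 a_eq c_eq by linarith
  show "B 3 6 = 2 * A 4 4 + 2 * A 6 6 + (10/3) * b - 2 * w"
    using dtau_127_div dtau_146_div dphi_1467 a_eq c_eq by linarith
  show "B 6 4 = A 3 4 + A 4 3 - (1/2) * C 3 6"
    using dphi_1234 dphi_2357 dphi_2467 dphi_1367 dphi_1457 dtau_145_div dtau_235_div dtau_136_div
      a_eq c_eq by linarith
  show "C 4 5 = - 2 * A 3 4 - 2 * A 4 3 - 2 * A 5 6 - 2 * A 6 5 + C 3 6"
    using dtau_145_div dtau_136_div dphi_1234 dphi_2357 dphi_2467 dphi_1256 dtau_235_div a_eq c_eq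
      by linarith
  show "C 3 5 = 2 * A 4 4 - 2 * A 6 6 + 2 * w"
    using dtau_146_div dphi_1467 dtau_127_div dtau_135_div dphi_1357 tau_12 tau_34 dtau_236_div
      dphi_2367 dtau_245_div dphi_2457 a_eq c_eq by linarith
  show "A 3 5 = - 2 * A 6 4"
    using dtau_234_div trace_C dphi_2567 dtau_367_div dphi_2347 a_eq c_eq by linarith
  show "z = - A 3 4 - A 5 6 + (1/2) * C 3 6"
    using dtau_235_div dtau_145_div dtau_136_div dphi_1234 dphi_2467 dphi_1256 a_eq c_eq by linarith
  show "C 4 6 = 2 * A 4 4 - 2 * A 6 6 + 2 * b - 2 * w"
    using dtau_236_div dphi_2367 tau_12 dtau_245_div dphi_2457 dtau_146_div dphi_1467 dtau_127_div
      dtau_135_div dphi_1357 tau_34 a_eq c_eq by linarith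
  show "A 5 5 = - A 6 6 - b"
    using dtau_245_div dphi_2457 dtau_146_div dphi_1467 dtau_127_div dtau_135_div dphi_1357 tau_12
      tau_34 dtau_236_div dphi_2367 a_eq c_eq by linarith
  show "A 4 5 = - 2 * A 5 4"
    using dtau_357_div dphi_1347 dtau_134_div a_eq c_eq by linarith
  show "A 4 6 = - 2 * A 6 4"
    using dtau_367_div dphi_2347 dtau_234_div a_eq c_eq by linarith
qed

lemma no_solution_c_eq_2b: False
proof -
  have jacobi_BC_34:
    "- 2 * A 3 4 * C 3 6 - 2 * A 4 3 * C 3 6 - (32/3) * A 4 4 * b - 4 * A 4 4^2 + A 5 4 * C 3 4
      + (20/3) * A 6 6 * b - 8 * A 6 6 * w + 4 * A 6 6^2 - 2 * B 5 6 * C 4 4 + C 3 4 * C 5 6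
      - C 3 4 * C 6 5 + 2 * C 3 4^2 + C 3 6^2 + 2 * C 4 4 * C 6 6 + 2 * C 4 4^2 - (20/3) * b * w
      - (10/3) * b^2 + 4 * w^2 = 0" (is "?J1 = 0")
    using BC[rule_format, of 3 4, simplified] unfolding sum_3_6 linear_solution by algebra
  have jacobi_AC_35:
    "- 4 * A 3 4 * A 4 3 - 4 * A 3 4 * A 5 6 - 2 * A 3 4 * A 6 5 + 3 * A 3 4 * C 3 6
      - 4 * A 3 4^2 - 2 * A 4 3 * A 5 6 + A 4 3 * C 3 6 + 4 * A 4 4 * A 6 6 - 2 * A 4 4 * b
      - 4 * A 4 4 * w - 2 * A 4 4^2 + 2 * A 5 4 * C 3 4 + 2 * A 5 4 * C 6 5 + A 5 6 * C 3 6
      - 2 * A 6 4 * C 4 4 + 2 * A 6 4 * C 6 6 - A 6 5 * C 3 6 + 2 * A 6 6 * b + 4 * A 6 6 * w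
      - 2 * A 6 6^2 - (1/2) * C 3 6^2 - 2 * b * w - 2 * w^2 = 0" (is "?J2 = 0")
    using AC[rule_format, of 3 5, simplified] unfolding sum_3_6 linear_solution by algebra
  have jacobi_AB_36:
    "4 * A 3 4 * A 5 6 + 2 * A 3 4 * A 6 5 - A 3 4 * C 3 6 + 2 * A 4 3 * A 5 6 + A 4 3 * C 3 6
      - 4 * A 4 4 * A 6 6 - (26/3) * A 4 4 * b + 4 * A 4 4 * w - 2 * A 4 4^2 - 2 * A 5 4 * C 3 4
      - 2 * A 5 4 * C 5 6 - 2 * A 5 4^2 - A 5 6 * C 3 6 - 4 * A 6 4 * B 5 6 + 2 * A 6 4 * C 4 4
      + 2 * A 6 4 * C 6 6 + A 6 5 * C 3 6 - (26/3) * A 6 6 * b + 4 * A 6 6 * w - 2 * A 6 6^2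
      - (1/2) * C 3 6^2 + (26/3) * b * w - (80/9) * b^2 - 2 * w^2 = 0" (is "?J3 = 0")
    using AB[rule_format, of 3 6, simplified] unfolding sum_3_6 linear_solution by algebra
  have jacobi_BC_43:
    "- 4 * A 3 4 * A 5 6 - 4 * A 3 4 * A 6 5 + 2 * A 3 4 * C 3 6 - 4 * A 4 3 * A 5 6
      - 4 * A 4 3 * A 6 5 + 2 * A 4 3 * C 3 6 + (16/3) * A 4 4 * b + 4 * A 4 4^2 - A 5 4 * C 3 4
      - A 5 4 * C 5 6 + A 5 4 * C 6 5 - 8 * A 5 6 * A 6 5 + 4 * A 5 6 * C 3 6 - 4 * A 5 6^2
      + 2 * A 6 4 * C 4 4 + 4 * A 6 5 * C 3 6 - 4 * A 6 5^2 - (4/3) * A 6 6 * b - 8 * A 6 6 * w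
      - 4 * A 6 6^2 - 2 * B 5 6 * C 4 4 - 3 * C 3 4 * C 5 6 + 3 * C 3 4 * C 6 5 - 2 * C 3 4^2
      - C 3 6^2 + 2 * C 4 4 * C 6 6 - 2 * C 4 4^2 + 2 * C 5 6 * C 6 5 - C 5 6^2 - C 6 5^2
      - (4/3) * b * w + (2/3) * b^2 - 4 * w^2 = 0" (is "?J4 = 0")
    using BC[rule_format, of 4 3, simplified] unfolding sum_3_6 linear_solution by algebra
  have jacobi_AB_45: "- 4 * A 3 4 * A 4 3 - 2 * A 3 4 * A 6 5 + A 3 4 * C 3 6 - 2 * A 4 3 * A 5 6
      - 4 * A 4 3 * A 6 5 + 3 * A 4 3 * C 3 6 - 4 * A 4 3^2 - 4 * A 4 4 * A 6 6
      - (10/3) * A 4 4 * b - 4 * A 4 4 * w - 2 * A 4 4^2 - 2 * A 5 4 * C 3 4 - 2 * A 5 4 * C 5 6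
      - 2 * A 5 4^2 - 4 * A 5 6 * A 6 5 + A 5 6 * C 3 6 + 4 * A 6 4 * B 5 6 + 2 * A 6 4 * C 4 4
      - 6 * A 6 4 * C 6 6 - 4 * A 6 4^2 + 3 * A 6 5 * C 3 6 - 4 * A 6 5^2 - (10/3) * A 6 6 * b
      - 4 * A 6 6 * w - 2 * A 6 6^2 - (1/2) * C 3 6^2 - (10/3) * b * w - (8/9) * b^2
      - 2 * w^2 = 0" (is "?J5 = 0")
    using AB[rule_format, of 4 5, simplified] unfolding sum_3_6 linear_solution by algebra
  have jacobi_AC_46:
    "4 * A 3 4 * A 5 6 + 2 * A 3 4 * A 6 5 - A 3 4 * C 3 6 + 2 * A 4 3 * A 5 6 + A 4 3 * C 3 6
      - 4 * A 4 4 * A 6 6 + 2 * A 4 4 * b - 4 * A 4 4 * w + 2 * A 4 4^2 - 2 * A 5 4 * C 3 4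
      - 4 * A 5 4 * C 5 6 + 2 * A 5 4 * C 6 5 + 4 * A 5 6 * A 6 5 - 3 * A 5 6 * C 3 6
      + 4 * A 5 6^2 + 2 * A 6 4 * C 4 4 - 2 * A 6 4 * C 6 6 - A 6 5 * C 3 6 - 2 * A 6 6 * b
      + 4 * A 6 6 * w + 2 * A 6 6^2 + (1/2) * C 3 6^2 - 2 * b * w + 2 * w^2 = 0" (is "?J6 = 0")
    using AC[rule_format, of 4 6, simplified] unfolding sum_3_6 linear_solution by algebra
  have jacobi_AC_53: "- 2 * A 3 4 * A 5 6 - A 3 4 * A 6 5 + (1/2) * A 3 4 * C 3 6 - A 4 3 * A 5 6
      - (1/2) * A 4 3 * C 3 6 + 2 * A 4 4 * A 6 6 - A 4 4 * b + 2 * A 4 4 * w - A 4 4^2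
      + A 5 4 * C 3 4 + 2 * A 5 4 * C 5 6 - A 5 4 * C 6 5 - 2 * A 5 6 * A 6 5
      + (3/2) * A 5 6 * C 3 6 - 2 * A 5 6^2 - A 6 4 * C 4 4 + A 6 4 * C 6 6
      + (1/2) * A 6 5 * C 3 6 + A 6 6 * b - 2 * A 6 6 * w - A 6 6^2 - (1/4) * C 3 6^2 + b * w
      - w^2 = 0" (is "?J7 = 0")
    using AC[rule_format, of 5 3, simplified] unfolding sum_3_6 linear_solution by algebra
  have jacobi_BC_56:
    "(32/3) * A 4 4 * b - 8 * A 4 4 * w + 4 * A 4 4^2 + A 5 4 * C 5 6 - 2 * A 5 6 * C 3 6
      - 2 * A 6 5 * C 3 6 - (20/3) * A 6 6 * b - 4 * A 6 6^2 + 2 * B 5 6 * C 6 6 + C 3 6^2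
      + C 5 6 * C 6 5 + C 5 6^2 - (32/3) * b * w + (16/3) * b^2 + 4 * w^2 = 0" (is "?J8 = 0")
    using BC[rule_format, of 5 6, simplified] unfolding sum_3_6 linear_solution by algebra
  have jacobi_BC_65:
    "- 8 * A 3 4 * A 4 3 - 4 * A 3 4 * A 5 6 - 4 * A 3 4 * A 6 5 + 4 * A 3 4 * C 3 6
      - 4 * A 3 4^2 - 4 * A 4 3 * A 5 6 - 4 * A 4 3 * A 6 5 + 4 * A 4 3 * C 3 6 - 4 * A 4 3^2
      - (16/3) * A 4 4 * b - 8 * A 4 4 * w - 4 * A 4 4^2 - A 5 4 * C 6 5 + 2 * A 5 6 * C 3 6
      - 2 * A 6 4 * C 6 6 + 2 * A 6 5 * C 3 6 + (4/3) * A 6 6 * b + 4 * A 6 6^2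
      + 2 * B 5 6 * C 6 6 - C 3 6^2 - C 5 6 * C 6 5 - C 6 5^2 - 4 * C 6 6^2 - (16/3) * b * w
      - (8/3) * b^2 - 4 * w^2 = 0" (is "?J9 = 0")
    using BC[rule_format, of 6 5, simplified] unfolding sum_3_6 linear_solution by algebra
  (* a sum-of-squares certificate: the weights of the squares and of the nine identities *)
  have "b^2 + (87 * (A 3 4 + A 4 3 + (22/29) * A 5 6 + (22/29) * A 6 5 - (22/29) * C 3 6)^2
      + 84 * (A 4 4 + b)^2 + 40 * (A 5 4 + (9/32) * C 3 4 + (23/80) * C 5 6 + (1/160) * C 6 5)^2
      + (1013/29) * (A 5 6 + A 6 5 - (462/1013) * C 3 6)^2 + 40 * (A 6 4 - (9/32) * C 4 4
      + (47/160) * C 6 6)^2 + 76 * (A 6 6 + (1/2) * b)^2 + (5355/128) * (C 3 4 + (274/595) * C 5 6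
      - (321/595) * C 6 5)^2 + (8778/1013) * (C 3 6)^2 + (5355/128) * (C 4 4 + (47/595) * C 6 6)^2
      + (6439/595) * (C 5 6 + C 6 5)^2 + (25756/595) * (C 6 6)^2 + 264 * (- (1/3) * b + w)^2
      + (121/9) * (b)^2) = - ((-45/4) * ?J1 + 10 * ?J2 + 10 * ?J3 + (45/4) * ?J4 + 10 * ?J5
      - 8 * ?J6 + 4 * ?J7 + (-47/4) * ?J8 + (47/4) * ?J9)"
    (is "b^2 + ?S = _") by algebra
  also have "\<dots> = 0"
    using jacobi_BC_34 jacobi_AC_35 jacobi_AB_36 jacobi_BC_43 jacobi_AB_45 jacobi_AC_46
      jacobi_AC_53 jacobi_BC_56 jacobi_BC_65
    by simp
  finally have "b^2 + ?S = 0" .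
  moreover have "0 \<le> ?S"
    by simp
  moreover have "0 < b^2"
    using b_nz by simp
  ultimately show False
    by linarith
qed

end

(* Transport along the automorphism e1 -> -e1, e2 -> -e2, e3 <-> e5, e4 <-> e6 of phi. *)
lemma swap_symmetry:
  "closed_eigenform_relations x y z w a c b lam (\<lambda>i j. A (swap_pairs i) (swap_pairs j))
     (\<lambda>i j. - B (swap_pairs i) (swap_pairs j)) (\<lambda>i j. - C (swap_pairs i) (swap_pairs j))"
proof (unfold_locales, unfold swap_pairs_simps, goal_cases)
  case 1
  show ?case
    using trace_B by (simp add: sum_3_6 swap_pairs_simps)
next
  case 2
  show ?case
    using trace_C by (simp add: sum_3_6 swap_pairs_simps)
next
  case 3
  show ?case
    using AB by (simp add: atLeastAtMost_3_6 sum_3_6 swap_pairs_simps algebra_simps)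
next
  case 4
  show ?case
    using AC by (simp add: atLeastAtMost_3_6 sum_3_6 swap_pairs_simps algebra_simps)
next
  case 5
  show ?case
    using BC by (simp add: atLeastAtMost_3_6 sum_3_6 swap_pairs_simps algebra_simps)
qed (use dphi_1234 dphi_1235 dphi_1236 dphi_1245 dphi_1246 dphi_1256 dphi_1347 dphi_1357
    dphi_1367 dphi_1457 dphi_1467 dphi_1567 dphi_2347 dphi_2357 dphi_2367 dphi_2457 dphi_2467
    dphi_2567 tau_12 tau_34 tau_35 tau_36 tau_45 tau_56 dtau_127 dtau_134 dtau_135 dtau_136
    dtau_145 dtau_146 dtau_156 dtau_234 dtau_235 dtau_236 dtau_245 dtau_246 dtau_256 dtau_347
    dtau_357 dtau_367 dtau_457 dtau_467 dtau_567 abc in linarith)+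

lemma lam_eq_0: "lam = 0"
proof (rule ccontr)
  assume lam_nz: "lam \<noteq> 0"
  then have "a \<noteq> 0"
    using dtau_127 by auto
  then have lam_bc: "lam = b * c"
    using a_bc_eq_a_lam by simp
  then have "b \<noteq> 0" "c \<noteq> 0"
    using lam_nz by auto
  have "a = - b - c"
    using abc by linarith
  then have "7 * (b * c) = (- b - c)^2 + b^2 + c^2"
    using seven_lam_eq_sum_squares lam_bc by simp
  then have "(c - 2 * b) * (b - 2 * c) = 0"
    by algebra
  then consider "c = 2 * b" | "b = 2 * c"
    by fastforce
  then show False
  proof cases
    case 1
    from this \<open>b \<noteq> 0\<close> lam_bc show False
      by (rule no_solution_c_eq_2b)
  next
    case 2
    have "lam = c * b"
      using lam_bc by (simp add: mult.commute)
    with 2 \<open>c \<noteq> 0\<close> show False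
      by (rule closed_eigenform_relations.no_solution_c_eq_2b[OF swap_symmetry])
  qed
qed

lemma torsion_coefficients_vanish: "a = 0 \<and> b = 0 \<and> c = 0"
proof -
  have "a^2 + b^2 + c^2 = 0"
    using seven_lam_eq_sum_squares lam_eq_0 by simp
  then have "a^2 = 0" "b^2 = 0" "c^2 = 0"
    using zero_le_power2[of a] zero_le_power2[of b] zero_le_power2[of c] by linarith+
  then show ?thesis
    by simp
qed

end

lemma closed_eigenform_relations_lie_c:
  fixes x y z w a b c lam :: real and A B C :: "nat \<Rightarrow> nat \<Rightarrow> real"
  defines "br \<equiv> lie_c x y z w A B C"
  assumes trB: "(\<Sum>i\<in>{3..6::nat}. B i i) = 0"
    and trC: "(\<Sum>i\<in>{3..6::nat}. C i i) = 0"
    and AB: "\<forall>i\<in>{3..6::nat}. \<forall>j\<in>{3..6}.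
               (\<Sum>k\<in>{3..6}. A i k * B k j - B i k * A k j) = x * B i j + y * C i j"
    and AC: "\<forall>i\<in>{3..6::nat}. \<forall>j\<in>{3..6}.
               (\<Sum>k\<in>{3..6}. A i k * C k j - C i k * A k j) = z * B i j + w * C i j"
    and BC: "\<forall>i\<in>{3..6::nat}. \<forall>j\<in>{3..6}.
               (\<Sum>k\<in>{3..6}. B i k * C k j - C i k * B k j) = 0"
    and closed: "dform br phi0 = (\<lambda>_. 0)"
    and tau: "tau2 br phi0 = tau_abc a b c"
    and eigen: "dform br (tau_abc a b c) = (\<lambda>I. lam * phi0 I)"
    and abc: "a + b + c = 0"
  shows "closed_eigenform_relations x y z w a b c lam A B C"
  using trB trC AB AC BC
    dform_phi0_components[of x y z w A B C, folded br_def, unfolded closed, symmetric]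
    tau2_phi0_components[of x y z w A B C, folded br_def, unfolded tau tau_abc_values, symmetric]
    dform_tau_abc_components[of x y z w A B C a b c, folded br_def,
      unfolded eigen phi0_values mult_1_right mult_zero_right mult_minus1_right, symmetric]
    abc
  by (rule closed_eigenform_relations.intro)

theorem proposition3p1:
  fixes x y z w a b c :: real and A B C :: "nat \<Rightarrow> nat \<Rightarrow> real"
  assumes trB: "(\<Sum>i\<in>{3..6::nat}. B i i) = 0"
    and trC: "(\<Sum>i\<in>{3..6::nat}. C i i) = 0"
    and AB: "\<forall>i\<in>{3..6::nat}. \<forall>j\<in>{3..6}.
               (\<Sum>k\<in>{3..6}. A i k * B k j - B i k * A k j) = x * B i j + y * C i j"
    and AC: "\<forall>i\<in>{3..6::nat}. \<forall>j\<in>{3..6}.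
               (\<Sum>k\<in>{3..6}. A i k * C k j - C i k * A k j) = z * B i j + w * C i j"
    and BC: "\<forall>i\<in>{3..6::nat}. \<forall>j\<in>{3..6}.
               (\<Sum>k\<in>{3..6}. B i k * C k j - C i k * B k j) = 0"
    and closed: "dform (lie_c x y z w A B C) phi0 = (\<lambda>_. 0)"
    and eigen: "\<exists>lam::real. hodge_laplacian (lie_c x y z w A B C) phi0 = (\<lambda>I. lam * phi0 I)"
    and tau: "tau2 (lie_c x y z w A B C) phi0 =
               (\<lambda>I. if I = {1,2} then a else if I = {3,4} then b else if I = {5,6} then c else 0)"
    and abc: "a + b + c = 0"
  shows "tau2 (lie_c x y z w A B C) phi0 = (\<lambda>_. 0)"
proof -
  let ?br = "lie_c x y z w A B C"
  have tau_eq: "tau2 ?br phi0 = tau_abc a b c"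
    by (simp add: tau fun_eq_iff tau_abc_def)
  obtain lam where "hodge_laplacian ?br phi0 = (\<lambda>I. lam * phi0 I)"
    using eigen by blast
  moreover have "hodge_laplacian ?br phi0 = dform ?br (tau_abc a b c)"
    using hodge_laplacian_closed[OF closed] tau_abc_two_form by (simp add: tau_eq)
  ultimately have "dform ?br (tau_abc a b c) = (\<lambda>I. lam * phi0 I)"
    by simp
  then have "closed_eigenform_relations x y z w a b c lam A B C"
    using closed_eigenform_relations_lie_c[OF trB trC AB AC BC closed tau_eq] abc by blast
  then have "a = 0 \<and> b = 0 \<and> c = 0"
    by (rule closed_eigenform_relations.torsion_coefficients_vanish)
  then show ?thesis
    by (simp add: tau fun_eq_iff)
qed

end
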